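(* Assume agents' preferences over sets of judgments are decisive. Then every judgment aggregation rule that satisfies participation also satisfies antipodal strategyproofness.
   Context: An agenda is a finite nonempty list $\Phi=(\phi_1,\dots,\phi_m)$ of propositional formulas; a judgment is $J\in\{0,1\}^m$, $J(\phi_k)$ its $k$-th entry; the antipodal judgment $\overline{J}$ accepts exactly the issues rejected by $J$. $\mathcal{J}(\Phi)\subseteq\{0,1\}^m$ is the nonempty set of admissible judgments. For a finite set of agents $N$, a profile is $\mathbf{P}=(J_1,\dots,J_n)\in\mathcal{J}(\Phi)^n$; $\mathbf{P}_{-i}$ is $\mathbf{P}$ with agent $i$'s judgment removed and $(\mathbf{P}_{-i},J)$ is $\mathbf{P}_{-i}$ with $J$ added as agent $i$'s judgment. A rule $F$ maps every profile (every finite group of agents, every agenda) to a nonempty $F(\mathbf{P})\subseteq\mathcal{J}(\Phi)$. Hamming distance $H(J,J')=\sum_k|J(\phi_k)-J'(\phi_k)|$. Agent $i$ with truthful judgment $J_i$ has $J\succ_i J'$ iff $H(J_i,J)<H(J_i,J')$. The preference over sets is decisive: for $X,Y\subseteq\mathcal{J}(\Phi)$, $X\mathrel{\mathring{\succ}}_i Y$ iff there exist $J\in X$, $J'\in Y$ with $J\succ_i J'$ and $\{J,J'\}\not\subseteq X\cap Y$. $F$ satisfies participation if there is no profile $\mathbf{P}$ and agent $i$ with $F(\mathbf{P}_{-i})\mathrel{\mathring{\succ}}_i F(\mathbf{P})$. $F$ satisfies antipodal strategyproofness if there is no profile $\mathbf{P}$ and agent $i$ with $F(\mathbf{P}_{-i},\overline{J_i})\mathrel{\mathring{\succ}}_i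 F(\mathbf{P})$. *)

theory Defs
  imports Main
begin

datatype form = Var nat | Neg form | Conj form form | Disj form form | Imp form form

text \<open>Agendas are nonempty lists of formulas; jdgs are 0/1 vectors, represented as
  bool lists of the same length as the agenda.\<close>
type_synonym agenda = "form list"
type_synonym jdg = "bool list"

definition well_formed_adm :: "(agenda \<Rightarrow> jdg set) \<Rightarrow> bool" where
  "well_formed_adm adm \<longleftrightarrow>
     (\<forall>\<Phi>. \<Phi> \<noteq> [] \<longrightarrow> adm \<Phi> \<noteq> {} \<and> (\<forall>J\<in>adm \<Phi>. length J = length \<Phi>))"

definition hamming :: "jdg \<Rightarrow> jdg \<Rightarrow> nat" where
  "hamming J J' = card {k. k < length J \<and> J ! k \<noteq> J' ! k}"

definition antipodal :: "jdg \<Rightarrow> jdg" where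
  "antipodal J = map Not J"

text \<open>A profile for agenda \<Phi>: a finite group of agents (the domain of the map, possibly
  empty) each with an admissible jdg. Removing agent i is P(i:=None); adding J as
  agent i's jdg is P(i \<mapsto> J).\<close>
definition is_profile :: "(agenda \<Rightarrow> jdg set) \<Rightarrow> agenda \<Rightarrow> ('ag \<rightharpoonup> jdg) \<Rightarrow> bool" where
  "is_profile adm \<Phi> P \<longleftrightarrow> finite (dom P) \<and> ran P \<subseteq> adm \<Phi>"

definition is_rule :: "(agenda \<Rightarrow> jdg set) \<Rightarrow> (agenda \<Rightarrow> ('ag \<rightharpoonup> jdg) \<Rightarrow> jdg set) \<Rightarrow> bool" where
  "is_rule adm F \<longleftrightarrow>
     (\<forall>\<Phi> P. \<Phi> \<noteq> [] \<longrightarrow> is_profile adm \<Phi> P \<longrightarrow> F \<Phi> P \<noteq> {} \<and> F \<Phi> P \<subseteq> adm \<Phi>)"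

definition dec_pref :: "jdg \<Rightarrow> jdg set \<Rightarrow> jdg set \<Rightarrow> bool" where
  "dec_pref Ji X Y \<longleftrightarrow>
     (\<exists>J\<in>X. \<exists>J'\<in>Y. hamming Ji J < hamming Ji J' \<and> \<not> ({J, J'} \<subseteq> X \<inter> Y))"

definition participation ::
  "(agenda \<Rightarrow> jdg set) \<Rightarrow> (agenda \<Rightarrow> ('ag \<rightharpoonup> jdg) \<Rightarrow> jdg set) \<Rightarrow> bool" where
  "participation adm F \<longleftrightarrow>
     (\<forall>\<Phi> P i Ji. \<Phi> \<noteq> [] \<longrightarrow> is_profile adm \<Phi> P \<longrightarrow> P i = Some Ji \<longrightarrow>
        \<not> dec_pref Ji (F \<Phi> (P(i := None))) (F \<Phi> P))"

text \<open>Antipodal strategyproofness; the deviation must itself yield a profile, i.e. the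
  antipodal jdg must be admissible.\<close>
definition antipodal_sp ::
  "(agenda \<Rightarrow> jdg set) \<Rightarrow> (agenda \<Rightarrow> ('ag \<rightharpoonup> jdg) \<Rightarrow> jdg set) \<Rightarrow> bool" where
  "antipodal_sp adm F \<longleftrightarrow>
     (\<forall>\<Phi> P i Ji. \<Phi> \<noteq> [] \<longrightarrow> is_profile adm \<Phi> P \<longrightarrow> P i = Some Ji \<longrightarrow>
        antipodal Ji \<in> adm \<Phi> \<longrightarrow>
        \<not> dec_pref Ji (F \<Phi> (P(i \<mapsto> antipodal Ji))) (F \<Phi> P))"

end

theory Submission
  imports Defs
begin

text \<open>Let \<open>J\<close> be agent \<open>i\<close>'s judgment, \<open>J'\<close> its antipode, \<open>Q\<close> the profile without \<open>i\<close>,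
  and write \<open>X \<succeq>\<^sub>J Y\<close> for "not \<open>Y \<succ>\<^sub>J X\<close>". Participation of \<open>i\<close> in \<open>P\<close> gives
  \<open>F(P) \<succeq>\<^sub>J F(Q)\<close>, and participation of \<open>i\<close> in the deviated profile \<open>(Q, J')\<close> gives
  \<open>F(Q, J') \<succeq>\<^sub>J\<^sub>' F(Q)\<close>. Since \<open>H(J', \<cdot>) = m - H(J, \<cdot>)\<close>, passing to the antipode reverses
  the decisive preference, so \<open>F(Q) \<succeq>\<^sub>J F(Q, J')\<close>. Finally \<open>\<succeq>\<^sub>J\<close> is transitive through a
  nonempty middle set, and \<open>F(Q)\<close> is nonempty, whence \<open>F(P) \<succeq>\<^sub>J F(Q, J')\<close>.\<close>

lemma hamming_le_length: "hamming J J' \<le> length J"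
proof -
  have "hamming J J' \<le> card {..<length J}"
    unfolding hamming_def by (rule card_mono) auto
  then show ?thesis by simp
qed

lemma hamming_antipodal:
  assumes "length J = length Ji"
  shows "hamming (antipodal Ji) J = length Ji - hamming Ji J"
proof -
  have "{k. k < length Ji \<and> map Not Ji ! k \<noteq> J ! k}
      = {..<length Ji} - {k. k < length Ji \<and> Ji ! k \<noteq> J ! k}"
    by auto
  moreover have "card ({..<length Ji} - {k. k < length Ji \<and> Ji ! k \<noteq> J ! k})
      = length Ji - card {k. k < length Ji \<and> Ji ! k \<noteq> J ! k}"
    by (subst card_Diff_subset) auto
  ultimately show ?thesis
    unfolding hamming_def antipodal_def by simp
qed

lemma hamming_antipodal_less_iff:
  assumes "length J = length Ji" "length J' = length Ji"
  shows "hamming (antipodal Ji) J < hamming (antipodal Ji) J' \<longleftrightarrow> hamming Ji J' < hamming Ji J"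
  using hamming_antipodal[OF assms(1)] hamming_antipodal[OF assms(2)]
    hamming_le_length[of Ji J] hamming_le_length[of Ji J'] by arith

lemma dec_pref_antipodal:
  assumes "\<forall>J \<in> X \<union> Y. length J = length Ji"
  shows "dec_pref (antipodal Ji) X Y \<longleftrightarrow> dec_pref Ji Y X"
proof -
  have "hamming (antipodal Ji) J < hamming (antipodal Ji) J' \<longleftrightarrow> hamming Ji J' < hamming Ji J"
    if "J \<in> X" "J' \<in> Y" for J J'
    using assms that by (simp add: hamming_antipodal_less_iff)
  then show ?thesis
    unfolding dec_pref_def by (auto simp: insert_commute Int_commute)
qed

lemma not_dec_pref_iff:
  "\<not> dec_pref Ji X Y \<longleftrightarrow> (\<forall>J\<in>X. \<forall>J'\<in>Y. hamming Ji J < hamming Ji J' \<longrightarrow> J \<in> Y \<and> J' \<in> X)"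
  unfolding dec_pref_def by auto

lemma not_dec_pref_trans:
  assumes XY: "\<not> dec_pref Ji X Y" and YZ: "\<not> dec_pref Ji Y Z" and "K \<in> Y"
  shows "\<not> dec_pref Ji X Z"
proof
  assume "dec_pref Ji X Z"
  then obtain J J' where J: "J \<in> X" "J' \<in> Z" and less: "hamming Ji J < hamming Ji J'"
    and not_both: "\<not> {J, J'} \<subseteq> X \<inter> Z"
    unfolding dec_pref_def by blast
  note XY = XY[unfolded not_dec_pref_iff, rule_format]
  note YZ = YZ[unfolded not_dec_pref_iff, rule_format]
  have "J \<in> Y \<or> J' \<in> Y"
  proof (cases "hamming Ji K < hamming Ji J'")
    case True
    then show ?thesis using YZ[OF \<open>K \<in> Y\<close> J(2)] by blast
  next
    case False
    then show ?thesis using XY[OF J(1) \<open>K \<in> Y\<close>] less by simp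
  qed
  then have "J \<in> Y \<and> J' \<in> Y"
    using XY[OF J(1) _ less] YZ[OF _ J(2) less] by blast
  then have "J \<in> Z" "J' \<in> X"
    using XY[OF J(1) _ less] YZ[OF _ J(2) less] by blast+
  then show False using J not_both by simp
qed

lemma is_profile_remove: "is_profile adm \<Phi> P \<Longrightarrow> is_profile adm \<Phi> (P(i := None))"
  unfolding is_profile_def by (auto simp: ran_def)

lemma is_profile_update:
  "is_profile adm \<Phi> P \<Longrightarrow> J \<in> adm \<Phi> \<Longrightarrow> is_profile adm \<Phi> (P(i \<mapsto> J))"
  unfolding is_profile_def by (auto simp: ran_def)

lemma is_profile_admissible: "is_profile adm \<Phi> P \<Longrightarrow> P i = Some J \<Longrightarrow> J \<in> adm \<Phi>"
  unfolding is_profile_def by (auto simp: ran_def)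

theorem theorem1:
  fixes adm :: "agenda \<Rightarrow> jdg set"
    and F :: "agenda \<Rightarrow> ('ag \<rightharpoonup> jdg) \<Rightarrow> jdg set"
  assumes "well_formed_adm adm"
    and "is_rule adm F"
    and "participation adm F"
  shows "antipodal_sp adm F"
  unfolding antipodal_sp_def
proof (intro allI impI)
  fix \<Phi> and P :: "'ag \<rightharpoonup> jdg" and i Ji
  assume \<Phi>: "\<Phi> \<noteq> []" and P: "is_profile adm \<Phi> P" and Pi: "P i = Some Ji"
    and anti: "antipodal Ji \<in> adm \<Phi>"
  let ?P' = "P(i \<mapsto> antipodal Ji)" and ?P\<^sub>0 = "P(i := None)"
  have P': "is_profile adm \<Phi> ?P'" and P\<^sub>0: "is_profile adm \<Phi> ?P\<^sub>0"
    using P anti by (simp_all add: is_profile_update is_profile_remove)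
  have stay: "\<not> dec_pref Ji (F \<Phi> ?P\<^sub>0) (F \<Phi> P)"
    using assms(3) \<Phi> P Pi unfolding participation_def by blast
  have "\<not> dec_pref (antipodal Ji) (F \<Phi> (?P'(i := None))) (F \<Phi> ?P')"
    using assms(3) \<Phi> P' unfolding participation_def by (meson fun_upd_same)
  then have "\<not> dec_pref (antipodal Ji) (F \<Phi> ?P\<^sub>0) (F \<Phi> ?P')"
    by simp
  moreover have "\<forall>J \<in> F \<Phi> ?P\<^sub>0 \<union> F \<Phi> ?P'. length J = length Ji"
  proof -
    have "F \<Phi> ?P\<^sub>0 \<union> F \<Phi> ?P' \<subseteq> adm \<Phi>"
      using assms(2) \<Phi> P' P\<^sub>0 unfolding is_rule_def by blast
    moreover have "\<forall>J \<in> adm \<Phi>. length J = length \<Phi>"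
      using assms(1) \<Phi> unfolding well_formed_adm_def by blast
    ultimately show ?thesis
      using is_profile_admissible[OF P Pi] by auto
  qed
  ultimately have deviate: "\<not> dec_pref Ji (F \<Phi> ?P') (F \<Phi> ?P\<^sub>0)"
    by (simp add: dec_pref_antipodal)
  obtain K where "K \<in> F \<Phi> ?P\<^sub>0"
    using assms(2) \<Phi> P\<^sub>0 unfolding is_rule_def by blast
  then show "\<not> dec_pref Ji (F \<Phi> ?P') (F \<Phi> P)"
    by (rule not_dec_pref_trans[OF deviate stay])
qed

end
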